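(* Consider a sequence of problems indexed by $n$ with a fixed integer $m\ge1$, a support set $\mathcal{S}\subseteq\{1,\dots,n\}$ of size $s=s(n)$, and a mean $\theta_1=\theta_1(n)>0$. Observations of component $i$ are i.i.d. $\mathcal{N}(0,1)$ if $i\notin\mathcal{S}$ and i.i.d. $\mathcal{N}(\theta_1,1)$ if $i\in\mathcal{S}$, independent across components and draws. Run sequential thresholding with $K=(1+\epsilon)\log_2 n$ passes, $\epsilon>0$: set $\mathcal{S}_0=\{1,\dots,n\}$; for $k=1,\dots,K$, for each $i\in\mathcal{S}_{k-1}$ take $m$ fresh observations $y^{(k)}_{i,1},\dots,y^{(k)}_{i,m}$, compute $T^{(k)}_{i,m}=\frac1m\sum_{j=1}^m y^{(k)}_{i,j}$, and set $\mathcal{S}_k=\{i\in\mathcal{S}_{k-1}:T^{(k)}_{i,m}>0\}$ (the threshold $0$ being the median of $T^{(k)}_{i,m}$ under the null). If $\theta_1>\sqrt{\frac{2}{m}\log(s\log_2 n)}$, then sequential thresholding is reliable, i.e. $\lim_{n\to\infty}\mathbb{P}(\mathcal{S}_K\neq\mathcal{S})=0$.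
   Context: A support estimator $\widehat{\mathcal{S}}(n)$ is reliable if $\lim_{n\to\infty}\mathbb{P}(\widehat{\mathcal{S}}(n)\neq\mathcal{S}(n))=0$. The inequality on $\theta_1$ is understood as a condition on the growth of $\theta_1(n)$ with $n$. *)

theory Defs
  imports "HOL-Probability.Probability"
begin

text \<open>Observation array: y (i, k, j) is the j-th observation (j = 1..m) of component i
  (i = 1..n) taken in pass k (k = 1..K).\<close>

definition obs_space :: "nat \<Rightarrow> nat \<Rightarrow> nat \<Rightarrow> nat set \<Rightarrow> real \<Rightarrow> (nat \<times> nat \<times> nat \<Rightarrow> real) measure" where
  "obs_space n K m S \<theta> =
     PiM ({1..n} \<times> {1..K} \<times> {1..m})
       (\<lambda>(i, k, j). density lborel (normal_density (if i \<in> S then \<theta> else 0) 1))"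

definition test_stat :: "nat \<Rightarrow> (nat \<times> nat \<times> nat \<Rightarrow> real) \<Rightarrow> nat \<Rightarrow> nat \<Rightarrow> real" where
  "test_stat m y i k = (\<Sum>j = 1..m. y (i, k, j)) / real m"

fun seq_thr :: "nat \<Rightarrow> nat \<Rightarrow> (nat \<times> nat \<times> nat \<Rightarrow> real) \<Rightarrow> nat \<Rightarrow> nat set" where
  "seq_thr n m y 0 = {1..n}"
| "seq_thr n m y (Suc k) = {i \<in> seq_thr n m y k. test_stat m y i (Suc k) > 0}"

definition num_passes :: "real \<Rightarrow> nat \<Rightarrow> nat" where
  "num_passes \<epsilon> n = nat \<lceil>(1 + \<epsilon>) * log 2 (real n)\<rceil>"

end

theory Submission
  imports Defs "HOL-Real_Asymp.Real_Asymp"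
begin

text \<open>
  The output \<open>S\<^sub>K\<close> is wrong only if some null component survives all \<open>K\<close> passes or some
  signal component is discarded in one of the passes. A null statistic is positive with probability
  \<open>1/2\<close>, independently across passes, so the first event has probability at most
  \<open>n 2\<^sup>-\<^sup>K \<le> n\<^sup>-\<^sup>\<epsilon>\<close>. A signal statistic is \<open>N(\<theta>, 1/m)\<close>, so by the Mills-ratio bound it is
  nonpositive with probability at most \<open>\<phi>(x)/x\<close> with \<open>x = \<surd>m \<theta>\<close>. Summing over the \<open>s\<close> signal
  components and the \<open>K \<approx> (1+\<epsilon>) log\<^sub>2 n\<close> passes, the growth condition \<open>x\<^sup>2/2 > ln (s log\<^sub>2 n)\<close>
  leaves a bound of order \<open>1 / \<surd>(ln log\<^sub>2 n)\<close>.
\<close>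

lemma indep_vars_PiM_components:
  assumes "I \<noteq> {}" and M: "\<And>i. i \<in> I \<Longrightarrow> prob_space (M i)"
    and sets_N: "\<And>i. i \<in> I \<Longrightarrow> sets (N i) = sets (M i)"
  shows "prob_space.indep_vars (PiM I M) N (\<lambda>i \<omega>. \<omega> i) I"
proof -
  interpret prob_space "PiM I M" by (rule prob_space_PiM[OF M])
  have component: "distr (PiM I M) (N i) (\<lambda>\<omega>. \<omega> i) = M i" if "i \<in> I" for i
  proof -
    have "distr (PiM I M) (N i) (\<lambda>\<omega>. \<omega> i) = distr (PiM I M) (M i) (\<lambda>\<omega>. \<omega> i)"
      by (rule distr_cong) (simp_all add: sets_N that)
    also have "\<dots> = M i" by (rule distr_PiM_component[OF M that])
    finally show ?thesis .
  qed
  have rv: "random_variable (N i) (\<lambda>\<omega>. \<omega> i)" if "i \<in> I" for i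
    by (subst measurable_cong_sets[OF refl sets_N[OF that]]) (rule measurable_component_singleton[OF that])
  have "sets (PiM I N) = sets (PiM I M)" by (rule sets_PiM_cong) (simp_all add: sets_N)
  then have "distr (PiM I M) (PiM I N) (\<lambda>\<omega>. \<lambda>i\<in>I. \<omega> i) = distr (PiM I M) (PiM I M) (\<lambda>\<omega>. \<omega>)"
    by (intro distr_cong) (auto simp: space_PiM PiE_def extensional_def)
  also have "\<dots> = PiM I (\<lambda>i. distr (PiM I M) (N i) (\<lambda>\<omega>. \<omega> i))"
    by (auto simp: component intro!: PiM_cong)
  finally show ?thesis
    using indep_vars_iff_distr_eq_PiM'[OF \<open>I \<noteq> {}\<close> rv] by simp
qed

lemma distributed_PiM_component:
  assumes dens: "\<And>i. i \<in> I \<Longrightarrow> prob_space (density lborel (f i))"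
    and "f i \<in> borel_measurable borel" and "i \<in> I"
  shows "distributed (PiM I (\<lambda>i. density lborel (f i))) lborel (\<lambda>\<omega>. \<omega> i) (f i)"
proof -
  have "distr (PiM I (\<lambda>i. density lborel (f i))) lborel (\<lambda>\<omega>. \<omega> i)
      = distr (PiM I (\<lambda>i. density lborel (f i))) (density lborel (f i)) (\<lambda>\<omega>. \<omega> i)"
    by (rule distr_cong) auto
  also have "\<dots> = density lborel (f i)"
    using distr_PiM_component[of I "\<lambda>i. density lborel (f i)", OF dens \<open>i \<in> I\<close>] by simp
  finally have "distr (PiM I (\<lambda>i. density lborel (f i))) lborel (\<lambda>\<omega>. \<omega> i) = density lborel (f i)" .
  moreover have "(\<lambda>\<omega>. \<omega> i) \<in> measurable (PiM I (\<lambda>i. density lborel (f i))) lborel"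
    by (subst measurable_cong_sets[OF refl sets_density[of lborel "f i", symmetric]])
      (rule measurable_component_singleton[OF \<open>i \<in> I\<close>])
  ultimately show ?thesis
    using assms by (simp add: distributed_def)
qed

lemma std_normal_upper_tail_le:
  fixes c :: real
  assumes "c > 0"
  shows "(\<integral>\<^sup>+x. ennreal (std_normal_density x) * indicator {c..} x \<partial>lborel) \<le> ennreal (std_normal_density c / c)"
proof -
  have "(\<integral>\<^sup>+x. ennreal (std_normal_density x) * indicator {c..} x \<partial>lborel)
     \<le> (\<integral>\<^sup>+x. ennreal (1/c) * (ennreal (x * std_normal_density x) * indicator {c..} x) \<partial>lborel)"
  proof (intro nn_integral_mono)
    fix x :: real
    have "std_normal_density x \<le> (1/c) * (x * std_normal_density x)" if "c \<le> x"
      using that \<open>c > 0\<close> by (simp add: field_simps mult_right_mono)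
    then show "ennreal (std_normal_density x) * indicator {c..} x
        \<le> ennreal (1/c) * (ennreal (x * std_normal_density x) * indicator {c..} x)"
      using \<open>c > 0\<close> by (auto simp: indicator_def ennreal_mult'[symmetric] intro: ennreal_leI)
  qed
  also have "\<dots> = ennreal (1/c) * (\<integral>\<^sup>+x. ennreal (x * std_normal_density x) * indicator {c..} x \<partial>lborel)"
    by (rule nn_integral_cmult) simp
  also have "(\<integral>\<^sup>+x. ennreal (x * std_normal_density x) * indicator {c..} x \<partial>lborel) = ennreal (std_normal_density c)"
  proof -
    have "((\<lambda>x. - std_normal_density x) has_real_derivative x * std_normal_density x) (at x)" for x
      unfolding std_normal_density_def by (rule derivative_eq_intros refl | simp)+
    moreover have "((\<lambda>x. - std_normal_density x) \<longlongrightarrow> 0) at_top"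
      unfolding std_normal_density_def by real_asymp
    ultimately show ?thesis
      using \<open>c > 0\<close> by (subst nn_integral_FTC_atLeast) auto
  qed
  also have "ennreal (1/c) * ennreal (std_normal_density c) = ennreal (std_normal_density c / c)"
    using \<open>c > 0\<close> by (simp add: ennreal_mult'[symmetric])
  finally show ?thesis .
qed

lemma (in prob_space) normal_nonpos_prob_le:
  assumes X: "distributed M lborel X (normal_density \<mu> \<sigma>)" and "\<mu> > 0" and "\<sigma> > 0"
  shows "prob {x \<in> space M. X x \<le> 0} \<le> std_normal_density (\<mu>/\<sigma>) / (\<mu>/\<sigma>)"
proof -
  define Z where "Z x = \<mu>/\<sigma> + (-1/\<sigma>) * X x" for x
  have "distributed M lborel Z (normal_density (\<mu>/\<sigma> + (-1/\<sigma>) * \<mu>) (\<bar>-1/\<sigma>\<bar> * \<sigma>))"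
    unfolding Z_def by (rule normal_density_affine[OF X]) (use \<open>\<sigma> > 0\<close> in simp_all)
  then have Z: "distributed M lborel Z std_normal_density"
    using \<open>\<sigma> > 0\<close> by simp
  have "{x \<in> space M. X x \<le> 0} = Z -` {\<mu>/\<sigma>..} \<inter> space M"
    using \<open>\<sigma> > 0\<close> by (auto simp: Z_def field_simps)
  then have "emeasure M {x \<in> space M. X x \<le> 0} \<le> ennreal (std_normal_density (\<mu>/\<sigma>) / (\<mu>/\<sigma>))"
    using distributed_emeasure[OF Z, of "{\<mu>/\<sigma>..}"] std_normal_upper_tail_le[of "\<mu>/\<sigma>"] assms(2,3)
    by simp
  then show ?thesis
    using assms(2,3) by (simp add: emeasure_eq_measure ennreal_le_iff)
qed

lemma (in prob_space) centered_normal_pos_prob_le_half: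
  assumes X: "distributed M lborel X (normal_density 0 \<sigma>)" and "\<sigma> > 0"
  shows "prob {x \<in> space M. X x > 0} \<le> 1/2"
proof -
  have "distributed M lborel (\<lambda>x. 0 + (-1) * X x) (normal_density (0 + (-1) * 0) (\<bar>-1\<bar> * \<sigma>))"
    by (rule normal_density_affine[OF X \<open>\<sigma> > 0\<close>]) simp
  then have neg_X: "distributed M lborel (\<lambda>x. - X x) (normal_density 0 \<sigma>)"
    by simp
  have "{x \<in> space M. X x > 0} = X -` {0<..} \<inter> space M"
    and "{x \<in> space M. X x < 0} = (\<lambda>x. - X x) -` {0<..} \<inter> space M"
    by auto
  then have symmetric: "prob {x \<in> space M. X x > 0} = prob {x \<in> space M. X x < 0}"
    using distributed_emeasure[OF X, of "{0<..}"] distributed_emeasure[OF neg_X, of "{0<..}"]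
    by (simp add: measure_def)
  have "prob {x \<in> space M. X x > 0} + prob {x \<in> space M. X x < 0}
      = prob ({x \<in> space M. X x > 0} \<union> {x \<in> space M. X x < 0})"
    using distributed_measurable[OF X] by (intro finite_measure_Union[symmetric]) auto
  also have "\<dots> \<le> 1" by simp
  finally show ?thesis using symmetric by simp
qed

lemma seq_thr_eq:
  "seq_thr n m y K = {i \<in> {1..n}. \<forall>k\<in>{1..K}. 0 < test_stat m y i k}"
  by (induction K) (auto simp: le_Suc_eq)

locale seq_thr_model =
  fixes n K m :: nat and S :: "nat set" and \<theta> :: real
  assumes n_pos: "1 \<le> n" and K_pos: "1 \<le> K" and m_pos: "1 \<le> m" and S_subset: "S \<subseteq> {1..n}"
begin

definition mean :: "nat \<Rightarrow> real" where
  "mean i = (if i \<in> S then \<theta> else 0)"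

definition block :: "nat \<Rightarrow> nat \<Rightarrow> (nat \<times> nat \<times> nat) set" where
  "block i k = {i} \<times> {k} \<times> {1..m}"

abbreviation Obs :: "(nat \<times> nat \<times> nat \<Rightarrow> real) measure" where
  "Obs \<equiv> obs_space n K m S \<theta>"

lemma obs_space_eq_PiM:
  "Obs = PiM ({1..n} \<times> {1..K} \<times> {1..m}) (\<lambda>p. density lborel (normal_density (mean (fst p)) 1))"
  unfolding obs_space_def mean_def by (intro PiM_cong) auto

sublocale prob_space Obs
  unfolding obs_space_eq_PiM by (intro prob_space_PiM prob_space_normal_density) simp

lemma observations_indep: "indep_vars (\<lambda>_. borel) (\<lambda>p y. y p) ({1..n} \<times> {1..K} \<times> {1..m})"
  unfolding obs_space_eq_PiM
  by (intro indep_vars_PiM_components prob_space_normal_density) (use n_pos K_pos m_pos in auto)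

lemma observation_distributed:
  assumes "p \<in> {1..n} \<times> {1..K} \<times> {1..m}"
  shows "distributed Obs lborel (\<lambda>y. y p) (normal_density (mean (fst p)) 1)"
  unfolding obs_space_eq_PiM
  by (rule distributed_PiM_component[where f="\<lambda>p. normal_density (mean (fst p)) 1"])
    (use assms in \<open>auto simp: prob_space_normal_density\<close>)

lemma test_stat_eq_block_sum: "test_stat m y i k = (\<Sum>p\<in>block i k. y p) / real m"
proof -
  have "block i k = (\<lambda>j. (i, k, j)) ` {1..m}" and "inj (\<lambda>j::nat. (i, k, j))"
    by (auto simp: block_def inj_def)
  then show ?thesis
    by (simp add: test_stat_def sum.reindex inj_on_subset[of _ UNIV])
qed

lemma block_subset: "i \<in> {1..n} \<Longrightarrow> k \<in> {1..K} \<Longrightarrow> block i k \<subseteq> {1..n} \<times> {1..K} \<times> {1..m}"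
  by (auto simp: block_def)

lemma test_stat_distributed:
  assumes i: "i \<in> {1..n}" and k: "k \<in> {1..K}"
  shows "distributed Obs lborel (\<lambda>y. test_stat m y i k) (normal_density (mean i) (1 / sqrt m))"
proof -
  have block: "finite (block i k)" "block i k \<noteq> {}" "card (block i k) = m"
    using m_pos by (auto simp: block_def card_cartesian_product)
  have "distributed Obs lborel (\<lambda>y. \<Sum>p\<in>block i k. y p)
      (normal_density (\<Sum>p\<in>block i k. mean (fst p)) (sqrt (\<Sum>p\<in>block i k. 1\<^sup>2)))"
    using block_subset[OF i k] observation_distributed
    by (intro sum_indep_normal block(1,2) indep_vars_subset[OF observations_indep]) auto
  moreover have "(\<Sum>p\<in>block i k. mean (fst p)) = (\<Sum>p\<in>block i k. mean i)"
    by (rule sum.cong) (auto simp: block_def)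
  ultimately have "distributed Obs lborel (\<lambda>y. \<Sum>p\<in>block i k. y p)
      (normal_density (real m * mean i) (sqrt m))"
    using block(3) by simp
  then have "distributed Obs lborel (\<lambda>y. 0 + (1 / real m) * (\<Sum>p\<in>block i k. y p))
      (normal_density (0 + (1 / real m) * (real m * mean i)) (\<bar>1 / real m\<bar> * sqrt m))"
    using m_pos by (intro normal_density_affine) auto
  moreover have "\<bar>1 / real m\<bar> * sqrt m = 1 / sqrt m"
    using m_pos by (simp add: field_simps real_div_sqrt)
  ultimately show ?thesis
    using m_pos by (simp add: test_stat_eq_block_sum)
qed

lemma test_stats_indep:
  assumes "i \<in> {1..n}"
  shows "indep_vars (\<lambda>_. borel) (\<lambda>k y. test_stat m y i k) {1..K}"
proof -
  have "indep_vars (\<lambda>k. PiM (block i k) (\<lambda>_. borel)) (\<lambda>k y. restrict (\<lambda>p. y p) (block i k)) {1..K}"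
    using block_subset[OF assms]
    by (intro indep_vars_restrict[OF observations_indep]) (auto simp: disjoint_family_on_def block_def)
  then have "indep_vars (\<lambda>_. borel)
      (\<lambda>k. (\<lambda>r. (\<Sum>p\<in>block i k. r p) / real m) \<circ> (\<lambda>y. restrict (\<lambda>p. y p) (block i k))) {1..K}"
    by (rule indep_vars_compose) measurable
  then show ?thesis
    by (rule indep_vars_cong[THEN iffD1, rotated -1]) (auto simp: test_stat_eq_block_sum)
qed

lemma null_survival_prob_le:
  assumes "i \<in> {1..n} - S"
  shows "prob {y \<in> space Obs. \<forall>k\<in>{1..K}. 0 < test_stat m y i k} \<le> (1/2) ^ K"
proof -
  define pos where "pos k = (\<lambda>y. test_stat m y i k) -` {0<..} \<inter> space Obs" for k
  have "{y \<in> space Obs. \<forall>k\<in>{1..K}. 0 < test_stat m y i k} = (\<Inter>k\<in>{1..K}. pos k)"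
    using K_pos by (auto simp: pos_def)
  then have "prob {y \<in> space Obs. \<forall>k\<in>{1..K}. 0 < test_stat m y i k} = (\<Prod>k\<in>{1..K}. prob (pos k))"
    using indep_varsD[OF test_stats_indep, of i "{1..K}" "\<lambda>_. {0<..}"] assms K_pos
    by (auto simp: pos_def)
  also have "\<dots> \<le> (\<Prod>k\<in>{1..K}. 1/2)"
  proof (rule prod_mono)
    fix k assume "k \<in> {1..K}"
    then have "distributed Obs lborel (\<lambda>y. test_stat m y i k) (normal_density 0 (1 / sqrt m))"
      using test_stat_distributed[of i k] assms by (simp add: mean_def)
    from centered_normal_pos_prob_le_half[OF this] m_pos
    show "0 \<le> prob (pos k) \<and> prob (pos k) \<le> 1/2"
      by (simp add: pos_def vimage_def Int_def conj_commute)
  qed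
  finally show ?thesis by simp
qed

lemma signal_miss_prob_le:
  assumes "i \<in> S" and "k \<in> {1..K}" and "\<theta> > 0"
  shows "prob {y \<in> space Obs. test_stat m y i k \<le> 0} \<le> std_normal_density (sqrt m * \<theta>) / (sqrt m * \<theta>)"
proof -
  have "distributed Obs lborel (\<lambda>y. test_stat m y i k) (normal_density \<theta> (1 / sqrt m))"
    using test_stat_distributed[of i k] assms S_subset by (auto simp: mean_def)
  from normal_nonpos_prob_le[OF this] show ?thesis
    using assms(3) m_pos by (simp add: mult.commute)
qed

lemma error_event_subset:
  "{y \<in> space Obs. seq_thr n m y K \<noteq> S}
     \<subseteq> (\<Union>i\<in>{1..n} - S. {y \<in> space Obs. \<forall>k\<in>{1..K}. 0 < test_stat m y i k})
       \<union> (\<Union>(i, k)\<in>S \<times> {1..K}. {y \<in> space Obs. test_stat m y i k \<le> 0})"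
proof
  fix y assume "y \<in> {y \<in> space Obs. seq_thr n m y K \<noteq> S}"
  then obtain i where "y \<in> space Obs" and "i \<in> seq_thr n m y K \<longleftrightarrow> i \<notin> S"
    by blast
  then show "y \<in> (\<Union>i\<in>{1..n} - S. {y \<in> space Obs. \<forall>k\<in>{1..K}. 0 < test_stat m y i k})
      \<union> (\<Union>(i, k)\<in>S \<times> {1..K}. {y \<in> space Obs. test_stat m y i k \<le> 0})"
    using S_subset by (cases "i \<in> S") (auto simp: seq_thr_eq not_less)
qed

theorem error_prob_le:
  assumes "\<theta> > 0"
  shows "prob {y \<in> space Obs. seq_thr n m y K \<noteq> S}
    \<le> real n * (1/2) ^ K + real (card S) * real K * (std_normal_density (sqrt m * \<theta>) / (sqrt m * \<theta>))"
proof -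
  define null_survives where
    "null_survives i = {y \<in> space Obs. \<forall>k\<in>{1..K}. 0 < test_stat m y i k}" for i
  define signal_missed where "signal_missed = (\<lambda>(i, k). {y \<in> space Obs. test_stat m y i k \<le> 0})"
  have stat_measurable: "(\<lambda>y. test_stat m y i k) \<in> borel_measurable Obs"
    if "i \<in> {1..n}" "k \<in> {1..K}" for i k
    using distributed_measurable[OF test_stat_distributed[OF that]] by simp
  have null_event: "null_survives i \<in> events" if "i \<in> {1..n} - S" for i
    using stat_measurable that unfolding null_survives_def
    by (intro sets.sets_Collect_finite_All) auto
  have miss_event: "signal_missed q \<in> events" if "q \<in> S \<times> {1..K}" for q
    using stat_measurable that S_subset unfolding signal_missed_def by auto
  have finite_S: "finite S"
    using S_subset finite_subset by blast
  have "prob {y \<in> space Obs. seq_thr n m y K \<noteq> S}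
      \<le> prob ((\<Union>i\<in>{1..n} - S. null_survives i) \<union> (\<Union>q\<in>S \<times> {1..K}. signal_missed q))"
    using error_event_subset null_event miss_event finite_S
    by (intro finite_measure_mono) (auto simp: null_survives_def signal_missed_def case_prod_beta)
  also have "\<dots> \<le> prob (\<Union>i\<in>{1..n} - S. null_survives i) + prob (\<Union>q\<in>S \<times> {1..K}. signal_missed q)"
    using null_event miss_event finite_S by (intro measure_Un_le sets.finite_UN) auto
  also have "prob (\<Union>i\<in>{1..n} - S. null_survives i) \<le> (\<Sum>i\<in>{1..n} - S. prob (null_survives i))"
    using null_event by (intro measure_UNION_le) auto
  also have "\<dots> \<le> (\<Sum>i\<in>{1..n} - S. (1/2) ^ K)"
    unfolding null_survives_def by (intro sum_mono null_survival_prob_le)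
  also have "\<dots> \<le> real n * (1/2) ^ K"
    using card_mono[of "{1..n}" "{1..n} - S"] by simp
  also have "prob (\<Union>q\<in>S \<times> {1..K}. signal_missed q) \<le> (\<Sum>q\<in>S \<times> {1..K}. prob (signal_missed q))"
    using miss_event finite_S by (intro measure_UNION_le) auto
  also have "\<dots> \<le> (\<Sum>q\<in>S \<times> {1..K}. std_normal_density (sqrt m * \<theta>) / (sqrt m * \<theta>))"
    using assms by (intro sum_mono) (auto simp: signal_missed_def signal_miss_prob_le)
  also have "\<dots> = real (card S) * real K * (std_normal_density (sqrt m * \<theta>) / (sqrt m * \<theta>))"
    by (simp add: card_cartesian_product)
  finally show ?thesis by simp
qed

end

lemma mult_half_pow_le_powr:
  fixes n K :: nat and e :: real
  assumes "1 \<le> n" and "(1 + e) * log 2 n \<le> K"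
  shows "real n * (1/2) ^ K \<le> real n powr (-e)"
proof -
  have "real n powr (1 + e) = (2 powr log 2 n) powr (1 + e)"
    using assms(1) by simp
  also have "\<dots> = 2 powr ((1 + e) * log 2 n)"
    by (simp add: powr_powr mult.commute)
  also have "\<dots> \<le> 2 powr K"
    using assms(2) by (intro powr_mono) auto
  also have "\<dots> = 2 ^ K"
    by (simp add: powr_realpow)
  finally have "real n powr (1 + e) \<le> 2 ^ K" .
  then have "real n / 2 ^ K \<le> real n / real n powr (1 + e)"
    using assms(1) by (intro divide_left_mono) auto
  then show ?thesis
    using assms(1) by (simp add: power_one_over powr_add powr_minus_divide)
qed

lemma card_mult_normal_tail_le:
  fixes s K m :: nat and \<theta> L c :: real
  assumes "L > 1" and "c \<ge> 0" and "m \<ge> 1" and "\<theta> > 0" and K: "K \<le> c * L"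
    and growth: "\<theta> > sqrt (2 / m * ln (s * L))"
  shows "real s * real K * (std_normal_density (sqrt m * \<theta>) / (sqrt m * \<theta>))
    \<le> c / (sqrt (2 * pi) * sqrt (2 * ln L))"
proof (cases "s = 0")
  case True
  then show ?thesis using assms by simp
next
  case False
  define x where "x = sqrt m * \<theta>"
  have "x > 0" using assms by (simp add: x_def)
  have "L \<le> s * L" using False \<open>L > 1\<close> by simp
  then have "ln L \<le> ln (s * L)" using \<open>L > 1\<close> by simp
  have nonneg: "0 \<le> 2 / m * ln (s * L)"
    using \<open>ln L \<le> ln (s * L)\<close> ln_gt_zero[OF \<open>L > 1\<close>] by (intro mult_nonneg_nonneg) (simp, linarith)
  have "(sqrt (2 / m * ln (s * L)))\<^sup>2 < \<theta>\<^sup>2"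
    using growth nonneg by (intro power_strict_mono) auto
  then have "2 / m * ln (s * L) < \<theta>\<^sup>2"
    using nonneg by simp
  then have x2: "2 * ln (s * L) < x\<^sup>2"
    using \<open>m \<ge> 1\<close> by (simp add: x_def power_mult_distrib field_simps)
  have "sqrt (2 * ln L) \<le> x"
    using x2 \<open>ln L \<le> ln (s * L)\<close> \<open>x > 0\<close> by (intro real_le_lsqrt) auto
  have "std_normal_density x \<le> 1 / (sqrt (2 * pi) * (s * L))"
  proof -
    have "exp (- x\<^sup>2 / 2) \<le> exp (- ln (s * L))" using x2 by simp
    also have "\<dots> = 1 / (s * L)" using \<open>L > 1\<close> False by (simp add: exp_minus field_simps)
    finally show ?thesis unfolding std_normal_density_def by (simp add: divide_right_mono field_simps)
  qed
  then have "real s * real K * (std_normal_density x / x) \<le> s * (c * L) * ((1 / (sqrt (2 * pi) * (s * L))) / x)"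
    using K \<open>x > 0\<close> by (intro mult_mono divide_right_mono) (auto intro: mult_left_mono)
  also have "\<dots> = c / (sqrt (2 * pi) * x)" using False \<open>L > 1\<close> \<open>x > 0\<close> by (simp add: field_simps)
  also have "\<dots> \<le> c / (sqrt (2 * pi) * sqrt (2 * ln L))"
    using \<open>sqrt (2 * ln L) \<le> x\<close> \<open>x > 0\<close> \<open>L > 1\<close> \<open>c \<ge> 0\<close>
    by (intro divide_left_mono mult_left_mono mult_pos_pos) auto
  finally show ?thesis unfolding x_def .
qed

lemma num_passes_bounds:
  assumes "2 \<le> n" and "\<epsilon> > 0"
  shows "(1 + \<epsilon>) * log 2 n \<le> num_passes \<epsilon> n" and "num_passes \<epsilon> n \<le> (2 + \<epsilon>) * log 2 n"
proof -
  have "log 2 n \<ge> 1" using assms(1) by simp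
  then have K: "real (num_passes \<epsilon> n) = of_int \<lceil>(1 + \<epsilon>) * log 2 n\<rceil>"
    using assms(2) by (simp add: num_passes_def)
  show "(1 + \<epsilon>) * log 2 n \<le> num_passes \<epsilon> n"
    unfolding K by (rule le_of_int_ceiling)
  have "real (num_passes \<epsilon> n) \<le> (1 + \<epsilon>) * log 2 n + 1"
    unfolding K by (rule of_int_ceiling_le_add_one)
  then show "num_passes \<epsilon> n \<le> (2 + \<epsilon>) * log 2 n"
    using \<open>log 2 n \<ge> 1\<close> by (simp add: algebra_simps)
qed

theorem seq_thr_error_prob_le:
  fixes n m :: nat and \<epsilon> \<theta> :: real and S :: "nat set"
  defines "M \<equiv> obs_space n (num_passes \<epsilon> n) m S \<theta>"
  assumes "3 \<le> n" and "1 \<le> m" and "\<epsilon> > 0" and "S \<subseteq> {1..n}" and "\<theta> > 0"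
    and growth: "\<theta> > sqrt (2 / m * ln (card S * log 2 n))"
  shows "measure M {y \<in> space M. seq_thr n m y (num_passes \<epsilon> n) \<noteq> S}
    \<le> n powr (-\<epsilon>) + (2 + \<epsilon>) / (sqrt (2 * pi) * sqrt (2 * ln (log 2 n)))"
proof -
  have "log 2 n > 1" using \<open>3 \<le> n\<close> by (simp add: less_log_iff)
  have K: "(1 + \<epsilon>) * log 2 n \<le> num_passes \<epsilon> n" "num_passes \<epsilon> n \<le> (2 + \<epsilon>) * log 2 n"
    using num_passes_bounds[of n \<epsilon>] assms(2,4) by auto
  have "1 < (1 + \<epsilon>) * log 2 n"
    using \<open>log 2 n > 1\<close> \<open>\<epsilon> > 0\<close> by (simp add: less_1_mult)
  then have "1 \<le> num_passes \<epsilon> n"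
    using K(1) by linarith
  then interpret seq_thr_model n "num_passes \<epsilon> n" m S \<theta>
    using assms by unfold_locales auto
  have "measure M {y \<in> space M. seq_thr n m y (num_passes \<epsilon> n) \<noteq> S}
      \<le> real n * (1/2) ^ num_passes \<epsilon> n
        + real (card S) * real (num_passes \<epsilon> n) * (std_normal_density (sqrt m * \<theta>) / (sqrt m * \<theta>))"
    unfolding M_def by (rule error_prob_le[OF \<open>\<theta> > 0\<close>])
  also have "\<dots> \<le> n powr (-\<epsilon>) + (2 + \<epsilon>) / (sqrt (2 * pi) * sqrt (2 * ln (log 2 n)))"
  proof (rule add_mono)
    show "real n * (1/2) ^ num_passes \<epsilon> n \<le> n powr (-\<epsilon>)"
      using \<open>3 \<le> n\<close> K(1) by (intro mult_half_pow_le_powr) auto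
    show "real (card S) * real (num_passes \<epsilon> n) * (std_normal_density (sqrt m * \<theta>) / (sqrt m * \<theta>))
        \<le> (2 + \<epsilon>) / (sqrt (2 * pi) * sqrt (2 * ln (log 2 n)))"
      using \<open>\<epsilon> > 0\<close>
      by (intro card_mult_normal_tail_le \<open>log 2 n > 1\<close> \<open>1 \<le> m\<close> \<open>\<theta> > 0\<close> K(2) growth) simp
  qed
  finally show ?thesis .
qed

theorem corollary2:
  fixes m :: nat and \<epsilon> :: real and S :: "nat \<Rightarrow> nat set" and \<theta> :: "nat \<Rightarrow> real"
  assumes m: "m \<ge> 1"
    and eps: "\<epsilon> > 0"
    and supp: "\<And>n. S n \<subseteq> {1..n}"
    and pos: "\<And>n. \<theta> n > 0"
    and growth: "eventually (\<lambda>n. \<theta> n > sqrt (2 / real m * ln (real (card (S n)) * log 2 (real n)))) sequentially"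
  shows "(\<lambda>n. measure (obs_space n (num_passes \<epsilon> n) m (S n) (\<theta> n))
            {y \<in> space (obs_space n (num_passes \<epsilon> n) m (S n) (\<theta> n)).
               seq_thr n m y (num_passes \<epsilon> n) \<noteq> S n}) \<longlonglongrightarrow> 0"
proof (rule tendsto_sandwich[OF _ _ tendsto_const])
  show "((\<lambda>n. n powr (-\<epsilon>) + (2 + \<epsilon>) / (sqrt (2 * pi) * sqrt (2 * ln (log 2 n)))) \<longlongrightarrow> 0) sequentially"
    using eps by real_asymp
  show "\<forall>\<^sub>F n in sequentially. measure (obs_space n (num_passes \<epsilon> n) m (S n) (\<theta> n))
            {y \<in> space (obs_space n (num_passes \<epsilon> n) m (S n) (\<theta> n)). seq_thr n m y (num_passes \<epsilon> n) \<noteq> S n}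
      \<le> n powr (-\<epsilon>) + (2 + \<epsilon>) / (sqrt (2 * pi) * sqrt (2 * ln (log 2 n)))"
    using growth eventually_ge_at_top[of 3]
  proof eventually_elim
    case (elim n)
    then show ?case
      using seq_thr_error_prob_le[OF elim(2) m eps supp pos elim(1)] by simp
  qed
qed simp

end
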